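(* Let $\alpha$ be a curve in $\mathbb{R}^3$ with nonzero curvature, let $\alpha_T$ be its tangent indicatrix, and let $\beta$ be a Bertrand-direction curve of $\alpha_T$ (an $X$-direction curve of $\alpha_T$ with $N_\beta=N_T$). Then $\alpha$ is a slant helix if and only if $\beta$ is a helix.
   Context: Let $\alpha:I\subset\mathbb{R}\to\mathbb{R}^3$ be a unit-speed curve with curvature $\kappa>0$, torsion $\tau$ and Frenet frame $\{T,N,B\}$. The tangent indicatrix of $\alpha$ is the curve $\alpha_T=T$ on the unit sphere. Its arc length is $s_T=\int\kappa\,ds$. Its Frenet apparatus is $\{T_T,N_T,B_T,\kappa_T,\tau_T\}$, with $\frac{dT_T}{ds_T}=\kappa_TN_T$, $\frac{dN_T}{ds_T}=-\kappa_TT_T+\tau_TB_T$ and $\frac{dB_T}{ds_T}=-\tau_TN_T$. Let $x,y,z$ be real functions of $s_T$ with $x^2+y^2+z^2=1$, and set $X=xT_T+yN_T+zB_T$. An integral curve $\beta$ of $X$, meaning $d\beta/ds_T=X$, is an $X$-direction curve of $\alpha_T$. It is regarded as a unit-speed Frenet curve with frame $\{T_\beta=X,N_\beta,B_\beta\}$, curvature $\kappa_\beta>0$ and torsion $\tau_\beta$. $\beta$ is a Bertrand-direction curve of $\alpha_T$ if $N_\beta=N_T$. A curve with curvature $k>0$ and torsion $t$ is a helix if its unit tangent makes a constant angle with a fixed line; equivalently, $t/k$ is constant. It is a slant helix if its principal normal makes a constant angle with a fixed line; equivalently, $\frac{k^2}{(k^2+t^2)^{3/2}}(t/k)'$ is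 constant, where $'$ is the derivative with respect to arc length. *)

theory Defs
  imports "HOL-Analysis.Analysis"
begin

text \<open>For a unit-speed curve
  with positive curvature these data are uniquely determined by gamma.\<close>
definition frenet ::
  "(real \<Rightarrow> real^3) \<Rightarrow> real set \<Rightarrow> (real \<Rightarrow> real^3) \<Rightarrow> (real \<Rightarrow> real^3) \<Rightarrow>
   (real \<Rightarrow> real^3) \<Rightarrow> (real \<Rightarrow> real) \<Rightarrow> (real \<Rightarrow> real) \<Rightarrow> bool" where
  "frenet \<gamma> J T N B k t \<longleftrightarrow>
     (\<forall>s\<in>J. (\<gamma> has_vector_derivative T s) (at s)
        \<and> norm (T s) = 1
        \<and> k s > 0
        \<and> norm (N s) = 1
        \<and> T s \<bullet> N s = 0
        \<and> B s = cross3 (T s) (N s)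
        \<and> (T has_vector_derivative (k s *\<^sub>R N s)) (at s)
        \<and> (N has_vector_derivative (- k s *\<^sub>R T s + t s *\<^sub>R B s)) (at s)
        \<and> (B has_vector_derivative (- t s *\<^sub>R N s)) (at s))"

text \<open>A vector field V along a curve (parameter set J) makes a constant angle with a
  fixed line spanned by the unit vector u iff V s \<bullet> u is constant (= cos of the angle).\<close>
definition const_angle_with_line :: "real set \<Rightarrow> (real \<Rightarrow> real^3) \<Rightarrow> bool" where
  "const_angle_with_line J V \<longleftrightarrow> (\<exists>u c. norm u = 1 \<and> (\<forall>s\<in>J. V s \<bullet> u = c))"

definition helix :: "(real \<Rightarrow> real^3) \<Rightarrow> real set \<Rightarrow> bool" where
  "helix \<gamma> J \<longleftrightarrow> (\<exists>T N B k t. frenet \<gamma> J T N B k t \<and> const_angle_with_line J T)"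

definition slant_helix :: "(real \<Rightarrow> real^3) \<Rightarrow> real set \<Rightarrow> bool" where
  "slant_helix \<gamma> J \<longleftrightarrow> (\<exists>T N B k t. frenet \<gamma> J T N B k t \<and> const_angle_with_line J N)"

end

theory Submission
  imports Defs
begin

text \<open>Along \<alpha>, the tangent of the tangent indicatrix is T_T = N, and reparametrised
  by the arc length s of \<alpha> both T_T and T_\<beta> have derivatives that are nonzero multiples
  of N_T = N_\<beta>. So for a fixed unit vector u, each of N \<bullet> u and T_\<beta> \<bullet> u is constant
  exactly when N_T \<bullet> u vanishes identically. Only the Bertrand condition N_\<beta> = N_T
  enters.\<close>

lemma has_real_derivative_inner_left:
  fixes g :: "real \<Rightarrow> 'a::real_inner"
  assumes "(g has_vector_derivative g') (at s)"
  shows "((\<lambda>s. g s \<bullet> u) has_real_derivative g' \<bullet> u) (at s)"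
  using bounded_linear.has_vector_derivative[OF bounded_linear_inner_left assms]
  by (simp add: has_real_derivative_iff_has_vector_derivative)

lemma constant_on_iff_derivative_zero:
  fixes f f' :: "real \<Rightarrow> real"
  assumes J: "open J" "is_interval J"
    and f: "\<And>s. s \<in> J \<Longrightarrow> (f has_real_derivative f' s) (at s)"
  shows "(\<exists>c. \<forall>s\<in>J. f s = c) \<longleftrightarrow> (\<forall>s\<in>J. f' s = 0)"
proof
  assume "\<exists>c. \<forall>s\<in>J. f s = c"
  then obtain c where c: "\<And>s. s \<in> J \<Longrightarrow> f s = c" by blast
  show "\<forall>s\<in>J. f' s = 0"
  proof
    fix s assume s: "s \<in> J"
    have "((\<lambda>_. c) has_real_derivative f' s) (at s)"
      by (rule has_field_derivative_transform_within_open[OF f[OF s] J(1) s]) (simp add: c)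
    then show "f' s = 0" using DERIV_const DERIV_unique by blast
  qed
next
  assume "\<forall>s\<in>J. f' s = 0"
  with f J(2) show "\<exists>c. \<forall>s\<in>J. f s = c"
    by (intro has_field_derivative_zero_constant)
      (auto simp: is_interval_convex_1 intro: has_field_derivative_at_within)
qed

lemma const_angle_with_line_iff_orthogonal:
  fixes V W :: "real \<Rightarrow> real^3"
  assumes J: "open J" "is_interval J"
    and V: "\<And>s. s \<in> J \<Longrightarrow> (V has_vector_derivative a s *\<^sub>R W s) (at s)"
    and a: "\<And>s. s \<in> J \<Longrightarrow> a s \<noteq> 0"
  shows "const_angle_with_line J V \<longleftrightarrow> (\<exists>u. norm u = 1 \<and> (\<forall>s\<in>J. W s \<bullet> u = 0))"
proof -
  have "(\<exists>c. \<forall>s\<in>J. V s \<bullet> u = c) \<longleftrightarrow> (\<forall>s\<in>J. W s \<bullet> u = 0)" for u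
  proof -
    have "(\<exists>c. \<forall>s\<in>J. V s \<bullet> u = c) \<longleftrightarrow> (\<forall>s\<in>J. a s * (W s \<bullet> u) = 0)"
      using J by (rule constant_on_iff_derivative_zero)
        (use has_real_derivative_inner_left[OF V] in simp)
    also have "\<dots> \<longleftrightarrow> (\<forall>s\<in>J. W s \<bullet> u = 0)"
      using a by auto
    finally show ?thesis .
  qed
  then show ?thesis
    unfolding const_angle_with_line_def by blast
qed

lemma const_angle_with_line_image:
  "const_angle_with_line (\<phi> ` J) V \<longleftrightarrow> const_angle_with_line J (V \<circ> \<phi>)"
  unfolding const_angle_with_line_def by auto

lemma frenet_tangent_unique:
  assumes "frenet \<gamma> J T N B k t" "frenet \<gamma> J T' N' B' k' t'" "s \<in> J"
  shows "T' s = T s"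
  using assms unfolding frenet_def by (metis vector_derivative_unique_at)

lemma frenet_normal_unique:
  assumes "frenet \<gamma> J T N B k t" "frenet \<gamma> J T' N' B' k' t'" "open J" "s \<in> J"
  shows "N' s = N s"
proof -
  have T: "(T has_vector_derivative k s *\<^sub>R N s) (at s)" "k s > 0" "norm (N s) = 1"
    and T': "(T' has_vector_derivative k' s *\<^sub>R N' s) (at s)" "k' s > 0" "norm (N' s) = 1"
    using assms unfolding frenet_def by auto
  have "(T has_vector_derivative k' s *\<^sub>R N' s) (at s)"
    by (rule has_vector_derivative_transform_within_open[OF T'(1) assms(3,4)])
      (use frenet_tangent_unique[OF assms(1,2)] in auto)
  then have eq: "k' s *\<^sub>R N' s = k s *\<^sub>R N s"
    using T(1) vector_derivative_unique_at by blast
  then have "k' s = k s"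
    using T T' by (metis norm_scaleR abs_of_pos mult.right_neutral)
  with eq T(2) show ?thesis by simp
qed

lemma helix_iff_tangent:
  assumes "frenet \<gamma> J T N B k t"
  shows "helix \<gamma> J \<longleftrightarrow> const_angle_with_line J T"
proof -
  have "const_angle_with_line J T' \<longleftrightarrow> const_angle_with_line J T"
    if "frenet \<gamma> J T' N' B' k' t'" for T' N' B' k' t'
    using frenet_tangent_unique[OF assms that] unfolding const_angle_with_line_def by auto
  then show ?thesis
    unfolding helix_def using assms by blast
qed

lemma slant_helix_iff_normal:
  assumes "frenet \<gamma> J T N B k t" "open J"
  shows "slant_helix \<gamma> J \<longleftrightarrow> const_angle_with_line J N"
proof -
  have "const_angle_with_line J N' \<longleftrightarrow> const_angle_with_line J N"
    if "frenet \<gamma> J T' N' B' k' t'" for T' N' B' k' t'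
    using frenet_normal_unique[OF assms(1) that assms(2)] unfolding const_angle_with_line_def by auto
  then show ?thesis
    unfolding slant_helix_def using assms(1) by blast
qed

lemma frenet_tangent_comp_has_vector_derivative:
  assumes "frenet \<gamma> (\<phi> ` I) T N B k t"
    and "\<And>s. s \<in> I \<Longrightarrow> (\<phi> has_real_derivative w s) (at s)" "s \<in> I"
  shows "(T \<circ> \<phi> has_vector_derivative (w s * k (\<phi> s)) *\<^sub>R N (\<phi> s)) (at s)"
proof -
  have "(T has_vector_derivative k (\<phi> s) *\<^sub>R N (\<phi> s)) (at (\<phi> s))"
    using assms(1,3) unfolding frenet_def by auto
  with assms(2)[OF assms(3)] show ?thesis
    using vector_diff_chain_at
    by (fastforce simp: has_real_derivative_iff_has_vector_derivative)
qed

lemma tangent_indicatrix_tangent: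
  assumes "frenet \<alpha> I T N B \<kappa> \<tau>" "open I"
    and "\<And>s. s \<in> I \<Longrightarrow> (\<phi> has_real_derivative \<kappa> s) (at s)"
    and "\<And>s. s \<in> I \<Longrightarrow> \<alpha>T (\<phi> s) = T s"
    and "frenet \<alpha>T (\<phi> ` I) TT NT BT \<kappa>T \<tau>T"
    and s: "s \<in> I"
  shows "TT (\<phi> s) = N s"
proof -
  have "(\<alpha>T has_vector_derivative TT (\<phi> s)) (at (\<phi> s))"
    using assms(5) s unfolding frenet_def by auto
  with assms(3)[OF s] have "(\<alpha>T \<circ> \<phi> has_vector_derivative \<kappa> s *\<^sub>R TT (\<phi> s)) (at s)"
    by (auto intro: vector_diff_chain_at simp: has_real_derivative_iff_has_vector_derivative)
  then have "(T has_vector_derivative \<kappa> s *\<^sub>R TT (\<phi> s)) (at s)"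
    by (rule has_vector_derivative_transform_within_open[OF _ assms(2) s]) (simp add: assms(4))
  moreover have "(T has_vector_derivative \<kappa> s *\<^sub>R N s) (at s)" "\<kappa> s > 0"
    using assms(1) s unfolding frenet_def by auto
  ultimately show ?thesis
    using vector_derivative_unique_at by fastforce
qed

theorem theorem5p7:
  fixes \<alpha> :: "real \<Rightarrow> real^3" and I :: "real set"
    and T N B :: "real \<Rightarrow> real^3" and \<kappa> \<tau> :: "real \<Rightarrow> real"
    and \<phi> :: "real \<Rightarrow> real"
    and \<alpha>T TT NT BT :: "real \<Rightarrow> real^3" and \<kappa>T \<tau>T :: "real \<Rightarrow> real"
    and x y z :: "real \<Rightarrow> real"
    and \<beta> Tb Nb Bb :: "real \<Rightarrow> real^3" and \<kappa>b \<tau>b :: "real \<Rightarrow> real"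
  assumes I: "open I" "is_interval I" "I \<noteq> {}"
    and \<alpha>: "frenet \<alpha> I T N B \<kappa> \<tau>"
    and sT: "\<And>s. s \<in> I \<Longrightarrow> (\<phi> has_real_derivative \<kappa> s) (at s)"
    and \<alpha>T_def: "\<And>s. s \<in> I \<Longrightarrow> \<alpha>T (\<phi> s) = T s"
    and \<alpha>T: "frenet \<alpha>T (\<phi> ` I) TT NT BT \<kappa>T \<tau>T"
    and xyz: "\<And>u. u \<in> \<phi> ` I \<Longrightarrow> (x u)\<^sup>2 + (y u)\<^sup>2 + (z u)\<^sup>2 = 1"
    and X: "\<And>u. u \<in> \<phi> ` I \<Longrightarrow> Tb u = x u *\<^sub>R TT u + y u *\<^sub>R NT u + z u *\<^sub>R BT u"
    and \<beta>: "frenet \<beta> (\<phi> ` I) Tb Nb Bb \<kappa>b \<tau>b"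
    and bertrand: "\<And>u. u \<in> \<phi> ` I \<Longrightarrow> Nb u = NT u"
  shows "slant_helix \<alpha> I \<longleftrightarrow> helix \<beta> (\<phi> ` I)"
proof -
  have nonzero: "\<kappa> s * \<kappa>T (\<phi> s) \<noteq> 0" "\<kappa> s * \<kappa>b (\<phi> s) \<noteq> 0" if "s \<in> I" for s
    using \<alpha> \<alpha>T \<beta> that unfolding frenet_def by auto
  have dTT: "(TT \<circ> \<phi> has_vector_derivative (\<kappa> s * \<kappa>T (\<phi> s)) *\<^sub>R NT (\<phi> s)) (at s)"
    if "s \<in> I" for s
    by (rule frenet_tangent_comp_has_vector_derivative[OF \<alpha>T sT that])
  have dTb: "(Tb \<circ> \<phi> has_vector_derivative (\<kappa> s * \<kappa>b (\<phi> s)) *\<^sub>R NT (\<phi> s)) (at s)"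
    if "s \<in> I" for s
    using frenet_tangent_comp_has_vector_derivative[OF \<beta> sT that] bertrand that by simp
  have "slant_helix \<alpha> I \<longleftrightarrow> const_angle_with_line I N"
    using \<alpha> I(1) by (rule slant_helix_iff_normal)
  also have "\<dots> \<longleftrightarrow> const_angle_with_line I (TT \<circ> \<phi>)"
    using tangent_indicatrix_tangent[OF \<alpha> I(1) sT \<alpha>T_def \<alpha>T]
    unfolding const_angle_with_line_def by auto
  also have "\<dots> \<longleftrightarrow> (\<exists>u. norm u = 1 \<and> (\<forall>s\<in>I. NT (\<phi> s) \<bullet> u = 0))"
    by (rule const_angle_with_line_iff_orthogonal[OF I(1,2) dTT nonzero(1)])
  also have "\<dots> \<longleftrightarrow> const_angle_with_line I (Tb \<circ> \<phi>)"
    by (rule const_angle_with_line_iff_orthogonal[OF I(1,2) dTb nonzero(2), symmetric])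
  also have "\<dots> \<longleftrightarrow> helix \<beta> (\<phi> ` I)"
    using helix_iff_tangent[OF \<beta>] const_angle_with_line_image by blast
  finally show ?thesis .
qed

end
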